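(* Let $\beta>0$ and $\gamma>0$ be real numbers. A $2\times 2$ table $P=\begin{pmatrix} p_{00} & p_{01}\\ p_{10} & p_{11}\end{pmatrix}$ (i.e. $p_{ij}>0$ for all $i,j\in\{0,1\}$ and $p_{00}+p_{01}+p_{10}+p_{11}=1$) satisfies \[ \frac{p_{00}p_{10}}{p_{01}p_{11}}=\beta^2 \quad\text{and}\quad \frac{p_{00}p_{01}}{p_{10}p_{11}}=\gamma^2 \] if and only if there exists a real number $v$ with $0<v<\frac{1}{\beta+\gamma}$ such that \[ P=\begin{pmatrix} \frac{\beta}{\beta+\frac{1}{\gamma}}\,[1-(\beta+\gamma)v] & \gamma v\\ \beta v & \frac{1}{\beta\gamma+1}\,[1-(\beta+\gamma)v]\end{pmatrix}. \]
   Context: A $2\times 2$ table is a point of the open probability simplex $\Delta=\{(p_{ij})\in\mathbb{A}^4: \sum p_{ij}=1,\ p_{ij}>0\}$. The odds ratios are $r_{||}=\frac{p_{00}p_{10}}{p_{01}p_{11}}$ and $r_==\frac{p_{00}p_{01}}{p_{10}p_{11}}$, written as $r_{||}=\beta^2$, $r_==\gamma^2$ with $\beta,\gamma>0$. *)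

theory Defs
  imports Complex_Main
begin

definition table2x2 :: "real \<Rightarrow> real \<Rightarrow> real \<Rightarrow> real \<Rightarrow> bool" where
  "table2x2 p00 p01 p10 p11 \<longleftrightarrow>
     p00 > 0 \<and> p01 > 0 \<and> p10 > 0 \<and> p11 > 0 \<and> p00 + p01 + p10 + p11 = 1"

end

theory Submission
  imports Defs
begin

text \<open>With x = p00/p11 and y = p01/p10 the two odds ratios are x/y and x*y, so
  prescribing them as \<beta>^2 and \<gamma>^2 fixes p00 = \<beta>\<gamma> p11 and
  p01/\<gamma> = p10/\<beta>. Calling the common value of the latter v, the constraint that
  the entries sum to 1 determines p11 in terms of v, and positivity of p11 is the bound
  v < 1/(\<beta>+\<gamma>).\<close>

lemma quotient_product_eq_squares_iff:
  fixes x y \<beta> \<gamma> :: real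
  assumes "x > 0" "y > 0" "\<beta> > 0" "\<gamma> > 0"
  shows "(x / y = \<beta>^2 \<and> x * y = \<gamma>^2) \<longleftrightarrow> (x = \<beta> * \<gamma> \<and> y = \<gamma> / \<beta>)"
proof
  assume "x / y = \<beta>^2 \<and> x * y = \<gamma>^2"
  then have quotient: "x / y = \<beta>^2" and product: "x * y = \<gamma>^2" by simp_all
  have "x^2 = (x / y) * (x * y)" using assms by (simp add: power2_eq_square)
  also have "\<dots> = (\<beta> * \<gamma>)^2" unfolding quotient product by (simp only: power_mult_distrib)
  finally have x: "x = \<beta> * \<gamma>"
    by (rule power2_eq_imp_eq) (use assms in simp_all)
  have "y = x / \<beta>^2" using quotient assms by (simp add: field_simps)
  also have "\<dots> = \<gamma> / \<beta>" unfolding x by (simp add: power2_eq_square)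
  finally show "x = \<beta> * \<gamma> \<and> y = \<gamma> / \<beta>" using x by simp
next
  assume "x = \<beta> * \<gamma> \<and> y = \<gamma> / \<beta>"
  then show "x / y = \<beta>^2 \<and> x * y = \<gamma>^2"
    using assms by (simp add: power2_eq_square)
qed

lemma odds_ratios_eq_squares_iff:
  fixes \<beta> \<gamma> p00 p01 p10 p11 :: real
  assumes "p00 > 0" "p01 > 0" "p10 > 0" "p11 > 0" "\<beta> > 0" "\<gamma> > 0"
  shows "(p00 * p10 / (p01 * p11) = \<beta>^2 \<and> p00 * p01 / (p10 * p11) = \<gamma>^2) \<longleftrightarrow>
         (p00 = \<beta> * \<gamma> * p11 \<and> p01 / \<gamma> = p10 / \<beta>)"
proof -
  have "p00 * p10 / (p01 * p11) = (p00 / p11) / (p01 / p10)"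
    and "p00 * p01 / (p10 * p11) = (p00 / p11) * (p01 / p10)"
    by simp_all
  moreover have "(p00 / p11 = \<beta> * \<gamma>) = (p00 = \<beta> * \<gamma> * p11)"
    and "(p01 / p10 = \<gamma> / \<beta>) = (p01 / \<gamma> = p10 / \<beta>)"
    using assms by (auto simp add: field_simps)
  ultimately show ?thesis
    using quotient_product_eq_squares_iff[of "p00 / p11" "p01 / p10" \<beta> \<gamma>] assms
    by (simp only: divide_pos_pos)
qed

lemma table2x2_parametrization_iff:
  fixes \<beta> \<gamma> p00 p01 p10 p11 :: real
  assumes "\<beta> > 0" and "\<gamma> > 0"
    and "table2x2 p00 p01 p10 p11"
  shows "(p00 = \<beta> * \<gamma> * p11 \<and> p01 / \<gamma> = p10 / \<beta>) \<longleftrightarrow>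
         (\<exists>v::real. 0 < v \<and> v < 1 / (\<beta> + \<gamma>) \<and>
            p00 = \<beta> / (\<beta> + 1 / \<gamma>) * (1 - (\<beta> + \<gamma>) * v) \<and>
            p01 = \<gamma> * v \<and>
            p10 = \<beta> * v \<and>
            p11 = 1 / (\<beta> * \<gamma> + 1) * (1 - (\<beta> + \<gamma>) * v))"
  (is "_ \<longleftrightarrow> (\<exists>v. ?param v)")
proof -
  have p: "p00 > 0" "p01 > 0" "p10 > 0" "p11 > 0" "p00 + p01 + p10 + p11 = 1"
    using assms(3) unfolding table2x2_def by auto
  have coeff: "\<beta> / (\<beta> + 1 / \<gamma>) = \<beta> * \<gamma> / (\<beta> * \<gamma> + 1)"
    using assms(1,2) by (simp add: field_simps)
  have denom: "\<beta> * \<gamma> + 1 > 0"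
    using assms(1,2) by (simp add: add_pos_pos)
  show ?thesis
  proof
    assume h: "p00 = \<beta> * \<gamma> * p11 \<and> p01 / \<gamma> = p10 / \<beta>"
    define v where "v = p01 / \<gamma>"
    have p01: "p01 = \<gamma> * v"
      using assms(2) by (simp add: v_def)
    have p10: "p10 = \<beta> * v"
      using h assms(1) by (simp add: v_def)
    have sum: "p11 * (\<beta> * \<gamma> + 1) = 1 - (\<beta> + \<gamma>) * v"
      using p(5) h p01 p10 by (simp add: algebra_simps)
    then have p11: "p11 = 1 / (\<beta> * \<gamma> + 1) * (1 - (\<beta> + \<gamma>) * v)"
      using denom by (simp add: field_simps)
    have "1 - (\<beta> + \<gamma>) * v > 0"
      using sum p(4) denom by (metis mult_pos_pos)
    then have "v < 1 / (\<beta> + \<gamma>)"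
      using assms(1,2) by (simp add: field_simps)
    moreover have "v > 0"
      using p(2) assms(2) by (simp add: v_def)
    moreover have "p00 = \<beta> / (\<beta> + 1 / \<gamma>) * (1 - (\<beta> + \<gamma>) * v)"
      unfolding coeff using h p11 by simp
    ultimately have "?param v"
      using p01 p10 p11 by blast
    then show "\<exists>v. ?param v" ..
  next
    assume "\<exists>v. ?param v"
    then obtain v where
      p00: "p00 = \<beta> * \<gamma> / (\<beta> * \<gamma> + 1) * (1 - (\<beta> + \<gamma>) * v)"
      and "p01 = \<gamma> * v" "p10 = \<beta> * v"
      and p11: "p11 = 1 / (\<beta> * \<gamma> + 1) * (1 - (\<beta> + \<gamma>) * v)"
      unfolding coeff by blast
    have "p00 = \<beta> * \<gamma> * p11"
      unfolding p00 p11 by simp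
    moreover have "p01 / \<gamma> = p10 / \<beta>"
      using \<open>p01 = \<gamma> * v\<close> \<open>p10 = \<beta> * v\<close> assms(1,2) by simp
    ultimately show "p00 = \<beta> * \<gamma> * p11 \<and> p01 / \<gamma> = p10 / \<beta>" ..
  qed
qed

theorem proposition2p3:
  fixes \<beta> \<gamma> p00 p01 p10 p11 :: real
  assumes "\<beta> > 0" and "\<gamma> > 0"
    and "table2x2 p00 p01 p10 p11"
  shows "(p00 * p10 / (p01 * p11) = \<beta>^2 \<and> p00 * p01 / (p10 * p11) = \<gamma>^2) \<longleftrightarrow>
         (\<exists>v::real. 0 < v \<and> v < 1 / (\<beta> + \<gamma>) \<and>
            p00 = \<beta> / (\<beta> + 1 / \<gamma>) * (1 - (\<beta> + \<gamma>) * v) \<and>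
            p01 = \<gamma> * v \<and>
            p10 = \<beta> * v \<and>
            p11 = 1 / (\<beta> * \<gamma> + 1) * (1 - (\<beta> + \<gamma>) * v))"
proof -
  have positive: "p00 > 0" "p01 > 0" "p10 > 0" "p11 > 0"
    using assms(3) unfolding table2x2_def by auto
  from positive assms(1,2)
  have "(p00 * p10 / (p01 * p11) = \<beta>^2 \<and> p00 * p01 / (p10 * p11) = \<gamma>^2) \<longleftrightarrow>
        (p00 = \<beta> * \<gamma> * p11 \<and> p01 / \<gamma> = p10 / \<beta>)"
    by (rule odds_ratios_eq_squares_iff)
  also note table2x2_parametrization_iff[OF assms]
  finally show ?thesis .
qed

end
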